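(* Let $A\in\mathbb{R}^{m\times m}$ be positive definite, $B\in\mathbb{R}^{m\times n}$ ($n\le m$), $\alpha\ge0$, $\beta>0$, and let $(\lambda,(u^*,v^* )^* )$ be an eigenpair of $\mathcal{P}_{MGSSP}^{-1}\mathcal{A}$ with $u\in\mathbb{C}^m$, $v\in\mathbb{C}^n$ and $B^Tu\neq0$. Set $a_1+ib_1=\frac{u^*Au}{u^*u}$ ($a_1,b_1\in\mathbb{R}$), $c_1=\frac{u^*BB^Tu}{u^*u}$, $a_2=\beta^2(a_1^2-b_1^2)-4\alpha\beta c_1$, $b_2=2\beta^2a_1b_1$, and $$z_1=\sqrt{\tfrac{\sqrt{a_2^2+b_2^2}+a_2}{2}},\qquad z_2=\operatorname{sign}(b_1)\sqrt{\tfrac{\sqrt{a_2^2+b_2^2}-a_2}{2}},$$ so that $(z_1+iz_2)^2=a_2+ib_2$. Let $D=\alpha\beta+2\beta a_1+4c_1+2i\beta b_1$. Then $\lambda$ is one of $$\lambda_+=\frac12+\frac{(z_1-\alpha\beta-\beta a_1)+i(z_2-\beta b_1)}{2D},\qquad \lambda_-=\frac12-\frac{(z_1+\alpha\beta+\beta a_1)+i(z_2+\beta b_1)}{2D},$$ and $$\Big|\lambda_\pm-\frac12\Big|^2\le\frac{(\alpha\beta+2\beta a_1)^2+\big(\beta|b_1|+\sqrt{\beta^2b_1^2+4\alpha\beta c_1}\big)^2}{4\big[(\alpha\beta+2\beta a_1+4c_1)^2+4\beta^2b_1^2\big]}\le\frac{(\alpha\beta+2\beta\rho(H))^2+\big(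\beta\rho(S)+\sqrt{\beta^2\rho(S)^2+4\alpha\beta\rho(BB^T)}\big)^2}{4\big(\alpha\beta+2\beta\lambda_{\min}(H)+4\lambda_{\min}(BB^T)\big)^2}.$$
   Context: A real square matrix $A$ is called positive definite if $x^TAx>0$ for all nonzero $x\in\mathbb{R}^m$ ($A$ need not be symmetric). $H=\frac12(A+A^T)$, $S=\frac12(A-A^T)$. $\mathcal{A}=\begin{pmatrix}A & B\\ -B^T & 0\end{pmatrix}$ and, for $\alpha\ge0,\beta>0$, $\mathcal{P}_{MGSSP}=\begin{pmatrix}\alpha I+2A & 2B\\ -2B^T & \beta I\end{pmatrix}$. $\lambda_{\min}(\cdot)$ is the smallest eigenvalue of a symmetric matrix, $\rho(\cdot)$ the spectral radius, $\operatorname{sign}(b_1)$ the sign of $b_1$ (with $\operatorname{sign}(0)$ taken as $\pm1$ arbitrarily; both choices give $z_2=0$ unless $b_1\neq0$). *)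

theory Defs
  imports "HOL-Analysis.Analysis"
begin

definition pos_def :: "real^'m^'m \<Rightarrow> bool" where
  "pos_def A \<longleftrightarrow> (\<forall>x::real^'m. x \<noteq> 0 \<longrightarrow> x \<bullet> (A *v x) > 0)"

definition cmat :: "real^'n^'m \<Rightarrow> complex^'n^'m" where
  "cmat M = (\<chi> i j. complex_of_real (M $ i $ j))"

definition spec_radius :: "real^'m^'m \<Rightarrow> real" where
  "spec_radius M = Max {cmod l | l. \<exists>x::complex^'m. x \<noteq> 0 \<and> cmat M *v x = l *s x}"

text \<open>Smallest (real) eigenvalue, meant for symmetric matrices.\<close>
definition lambda_min :: "real^'m^'m \<Rightarrow> real" where
  "lambda_min M = Min {l. \<exists>x::real^'m. x \<noteq> 0 \<and> M *v x = l *s x}"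

definition saddle_mat :: "real^'m^'m \<Rightarrow> real^'n^'m \<Rightarrow> real^('m+'n)^('m+'n)" where
  "saddle_mat A B = (\<chi> i j. case i of
       Inl p \<Rightarrow> (case j of Inl q \<Rightarrow> A $ p $ q | Inr q \<Rightarrow> B $ p $ q)
     | Inr p \<Rightarrow> (case j of Inl q \<Rightarrow> - (B $ q $ p) | Inr q \<Rightarrow> 0))"

definition P_MGSSP :: "real \<Rightarrow> real \<Rightarrow> real^'m^'m \<Rightarrow> real^'n^'m \<Rightarrow> real^('m+'n)^('m+'n)" where
  "P_MGSSP \<alpha> \<beta> A B = (\<chi> i j. case i of
       Inl p \<Rightarrow> (case j of Inl q \<Rightarrow> \<alpha> * (if p = q then 1 else 0) + 2 * A $ p $ q
                          | Inr q \<Rightarrow> 2 * B $ p $ q)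
     | Inr p \<Rightarrow> (case j of Inl q \<Rightarrow> - 2 * B $ q $ p
                          | Inr q \<Rightarrow> \<beta> * (if p = q then 1 else 0)))"

definition stack :: "complex^'m \<Rightarrow> complex^'n \<Rightarrow> complex^('m+'n)" where
  "stack u v = (\<chi> i. case i of Inl p \<Rightarrow> u $ p | Inr q \<Rightarrow> v $ q)"

definition cdot :: "complex^'m \<Rightarrow> complex^'m \<Rightarrow> complex" where
  "cdot x y = (\<Sum>i\<in>UNIV. cnj (x $ i) * y $ i)"

end

theory Submission
  imports Defs
begin

text \<open>Written blockwise, the eigenvalue equation \<open>\<A> w = \<lambda> \<P> w\<close> for \<open>w = (u; v)\<close> consists of
  \<open>A u + B v = \<lambda> (\<alpha> u + 2 A u + 2 B v)\<close> and \<open>-B\<^sup>T u = \<lambda> (-2 B\<^sup>T u + \<beta> v)\<close>.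
  Pairing the first with \<open>u\<close> and the second with \<open>B\<^sup>T u\<close> and eliminating \<open>(B\<^sup>T u)\<^sup>* v\<close>
  gives the quadratic \<open>(1 - 2\<lambda>) \<lambda> \<beta> w - \<lambda>\<^sup>2 \<alpha> \<beta> - (1 - 2\<lambda>)\<^sup>2 c1 = 0\<close> with
  \<open>w = a1 + i b1\<close>; its roots are \<open>\<lambda>\<^sub>\<plusminus>\<close>, where \<open>z1 + i z2\<close> is a square root of the
  discriminant \<open>\<beta>\<^sup>2 w\<^sup>2 - 4 \<alpha> \<beta> c1\<close>. Since the modulus of the discriminant is at most
  \<open>\<beta>\<^sup>2 |w|\<^sup>2 + 4 \<alpha> \<beta> c1\<close>, one gets \<open>0 \<le> z1 \<le> \<beta> a1\<close> and \<open>|z2| \<le> \<surd>(\<beta>\<^sup>2 b1\<^sup>2 + 4 \<alpha> \<beta> c1)\<close>,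
  which is the first bound. The second follows from
  \<open>\<lambda>\<^sub>m\<^sub>i\<^sub>n(H) \<le> a1 \<le> \<rho>(H)\<close>, \<open>|b1| \<le> \<rho>(S)\<close> and \<open>\<lambda>\<^sub>m\<^sub>i\<^sub>n(B B\<^sup>T) \<le> c1 \<le> \<rho>(B B\<^sup>T)\<close>,
  i.e. from the extremal Rayleigh quotients of symmetric matrices and, for \<open>S\<close>, from the
  singular values of a skew-symmetric matrix being the moduli of its eigenvalues.\<close>

section \<open>Eigenvalues of real symmetric matrices\<close>

abbreviation eigenvalues :: "'a::field^'n^'n \<Rightarrow> 'a set" where
  "eigenvalues M \<equiv> {l. \<exists>x. x \<noteq> 0 \<and> M *v x = l *s x}"

lemma inner_matrix_vector_transpose:
  fixes M :: "real^'n^'m"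
  shows "x \<bullet> (M *v y) = (transpose M *v x) \<bullet> y"
  by (simp add: dot_lmul_matrix)

lemma uminus_matrix_vector_mult:
  fixes M :: "'a::ring_1^'n^'m"
  shows "(- M) *v x = - (M *v x)"
  by (simp add: vec_eq_iff matrix_vector_mult_def sum_negf)

lemma scaleR_matrix_vector_mult:
  fixes M :: "'a::real_algebra_1^'n^'m"
  shows "(c *\<^sub>R M) *v x = c *\<^sub>R (M *v x)"
  by (simp add: vec_eq_iff matrix_vector_mult_def scaleR_sum_right)

lemma eigenvectors_independent:
  fixes M :: "'a::field^'n^'n"
  assumes "finite X" "\<forall>x\<in>X. x \<noteq> 0 \<and> M *v x = e x *s x" "inj_on e X"
  shows "vec.independent X"
  using assms
proof (induction X rule: finite_induct)
  case empty
  then show ?case by (simp add: vec.independent_empty)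
next
  case (insert x X)
  have indep: "vec.independent X" using insert by (auto simp: inj_on_insert)
  have "x \<notin> vec.span X"
  proof
    assume "x \<in> vec.span X"
    then obtain c where c: "x = (\<Sum>v\<in>X. c v *s v)"
      using vec.span_finite[OF insert(1)] by auto
    have "M *v x = (\<Sum>v\<in>X. (c v * e v) *s v)"
      unfolding c vec.sum using insert(4) by (intro sum.cong) (auto simp: vec.scale)
    moreover have "e x *s x = (\<Sum>v\<in>X. (c v * e x) *s v)"
      unfolding c vec.scale_sum_right by (simp add: mult.commute)
    ultimately have combination: "(\<Sum>v\<in>X. (c v * (e v - e x)) *s v) = 0"
      using insert(4) by (simp add: sum_subtractf vec.scale_left_diff_distrib right_diff_distrib)
    have "(\<Sum>v\<in>X. d v *s v) = 0 \<Longrightarrow> v \<in> X \<Longrightarrow> d v = 0" for d v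
      using indep vec.independent_explicit by blast
    from this[OF combination] have "\<forall>v\<in>X. c v * (e v - e x) = 0" by blast
    moreover have "\<forall>v\<in>X. e v \<noteq> e x" using insert(2,5) by (auto simp: inj_on_def)
    ultimately have "x = 0" using c by simp
    thus False using insert(4) by auto
  qed
  then show ?case using indep by (rule vec.independent_insertI)
qed

lemma finite_eigenvalues:
  fixes M :: "'a::field^'n^'n"
  shows "finite (eigenvalues M)"
proof -
  have "finite (eigenvalues M) \<and> card (eigenvalues M) \<le> CARD('n)"
  proof (rule finite_if_finite_subsets_card_bdd)
    fix G assume G: "G \<subseteq> eigenvalues M" "finite G"
    define f where "f l = (SOME x. x \<noteq> 0 \<and> M *v x = l *s x)" for l
    have f: "\<forall>l\<in>G. f l \<noteq> 0 \<and> M *v f l = l *s f l"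
    proof
      fix l assume "l \<in> G"
      hence "\<exists>x. x \<noteq> 0 \<and> M *v x = l *s x" using G(1) by auto
      from someI_ex[OF this] show "f l \<noteq> 0 \<and> M *v f l = l *s f l" unfolding f_def .
    qed
    have inj: "inj_on f G"
    proof (rule inj_onI)
      fix a b assume "a \<in> G" "b \<in> G" "f a = f b"
      with f have "a *s f a = b *s f a" "f a \<noteq> 0" by metis+
      thus "a = b" by auto
    qed
    have "vec.independent (f ` G)"
      by (rule eigenvectors_independent[where e = "inv_into G f"])
        (use G f inj in \<open>auto simp: inj_on_inv_into\<close>)
    hence "card (f ` G) \<le> CARD('n)"
      using vec.independent_bound_general dim_subset_UNIV_cart_gen order_trans by blast
    thus "card G \<le> CARD('n)" using card_image[OF inj] by simp
  qed
  thus ?thesis by simp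
qed

lemma linear_coeff_nonpos_if_quadratic_nonpos:
  fixes a b :: real
  assumes "\<forall>t. 2 * t * a + t^2 * b \<le> 0"
  shows "a \<le> 0"
proof (rule ccontr)
  assume "\<not> a \<le> 0"
  define t where "t = a / (\<bar>b\<bar> + 1)"
  have t: "t > 0" "t * \<bar>b\<bar> \<le> a" using \<open>\<not> a \<le> 0\<close> by (auto simp: t_def field_simps)
  have "- \<bar>b\<bar> \<le> b" using abs_ge_minus_self[of b] by linarith
  hence "t * (- \<bar>b\<bar>) \<le> t * b" using t(1) by (intro mult_left_mono) auto
  hence "2 * a + t * b > 0" using t(2) \<open>\<not> a \<le> 0\<close> by simp
  hence "t * (2 * a + t * b) > 0" using t(1) by simp
  moreover have "t * (2 * a + t * b) = 2 * t * a + t^2 * b" by (simp add: power2_eq_square algebra_simps)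
  ultimately show False using assms by (metis not_le)
qed

lemma quadratic_form_max_on_sphere:
  fixes H :: "real^'n^'n"
  obtains x l where "norm x = 1" "x \<bullet> (H *v x) = l" "\<forall>y. y \<bullet> (H *v y) \<le> l * (y \<bullet> y)"
proof -
  have "continuous_on (sphere 0 1) (\<lambda>y. y \<bullet> (H *v y))"
    by (intro continuous_intros linear_continuous_on matrix_vector_mul_linear)
  then obtain x where x: "x \<in> sphere 0 1" "\<forall>y\<in>sphere 0 1. y \<bullet> (H *v y) \<le> x \<bullet> (H *v x)"
    using continuous_attains_sup[of "sphere (0::real^'n) 1"] by force
  have "y \<bullet> (H *v y) \<le> (x \<bullet> (H *v x)) * (y \<bullet> y)" for y
  proof (cases "y = 0")
    case False
    hence "(1 / norm y) *\<^sub>R y \<in> sphere 0 1" by simp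
    hence "((1 / norm y) *\<^sub>R y) \<bullet> (H *v ((1 / norm y) *\<^sub>R y)) \<le> x \<bullet> (H *v x)"
      using x(2) by blast
    hence "(1 / norm y)^2 * (y \<bullet> (H *v y)) \<le> x \<bullet> (H *v x)"
      by (simp add: matrix_vector_mult_scaleR power2_eq_square)
    thus ?thesis using False by (simp add: field_simps dot_square_norm)
  qed simp
  with x(1) that show thesis by simp
qed

text \<open>A maximiser of the Rayleigh quotient of a symmetric matrix is an eigenvector: perturbing
  it in the direction of the residual \<open>H x - l x\<close> would otherwise increase the quotient.\<close>
lemma symmetric_rayleigh_maximiser_eigenvector:
  fixes H :: "real^'n^'n"
  assumes sym: "transpose H = H"
    and le: "\<forall>y. y \<bullet> (H *v y) \<le> l * (y \<bullet> y)" and eq: "x \<bullet> (H *v x) = l * (x \<bullet> x)"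
  shows "H *v x = l *s x"
proof -
  define w where "w = H *v x - l *\<^sub>R x"
  have "w \<bullet> (H *v x) = x \<bullet> (H *v w)"
    using inner_matrix_vector_transpose[of w H x] sym by (simp add: inner_commute)
  hence "(x + t *\<^sub>R w) \<bullet> (H *v (x + t *\<^sub>R w)) - l * ((x + t *\<^sub>R w) \<bullet> (x + t *\<^sub>R w))
        = 2 * t * (w \<bullet> w) + t^2 * (w \<bullet> (H *v w) - l * (w \<bullet> w))" for t
    using eq unfolding w_def
    by (simp add: matrix_vector_right_distrib matrix_vector_mult_scaleR inner_add_left
        inner_add_right inner_diff_left inner_diff_right power2_eq_square algebra_simps inner_commute)
  hence "\<forall>t. 2 * t * (w \<bullet> w) + t^2 * (w \<bullet> (H *v w) - l * (w \<bullet> w)) \<le> 0"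
    using le by (metis diff_le_0_iff_le)
  hence "w \<bullet> w \<le> 0" by (rule linear_coeff_nonpos_if_quadratic_nonpos)
  hence "w = 0" by (metis inner_ge_zero inner_eq_zero_iff order_antisym)
  thus ?thesis unfolding w_def by (simp add: scalar_mult_eq_scaleR)
qed

lemma symmetric_rayleigh_max_eigenvalue:
  fixes H :: "real^'n^'n"
  assumes "transpose H = H"
  shows "\<exists>l\<in>eigenvalues H. \<forall>y. y \<bullet> (H *v y) \<le> l * (y \<bullet> y)"
proof -
  obtain x l where x: "norm x = 1" "x \<bullet> (H *v x) = l" and le: "\<forall>y. y \<bullet> (H *v y) \<le> l * (y \<bullet> y)"
    by (rule quadratic_form_max_on_sphere)
  have "x \<bullet> (H *v x) = l * (x \<bullet> x)" using x by (simp add: dot_square_norm)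
  with assms le have "H *v x = l *s x" by (rule symmetric_rayleigh_maximiser_eigenvector)
  moreover have "x \<noteq> 0" using x(1) by auto
  ultimately show ?thesis using le by blast
qed

lemma symmetric_rayleigh_min_eigenvalue:
  fixes H :: "real^'n^'n"
  assumes "transpose H = H"
  shows "\<exists>l\<in>eigenvalues H. \<forall>y. l * (y \<bullet> y) \<le> y \<bullet> (H *v y)"
proof -
  have "transpose (- H) = - H" using assms by (simp add: vec_eq_iff transpose_def)
  then obtain l where l: "l \<in> eigenvalues (- H)" and le: "\<forall>y. y \<bullet> ((- H) *v y) \<le> l * (y \<bullet> y)"
    using symmetric_rayleigh_max_eigenvalue by blast
  from l obtain x where x: "x \<noteq> 0" "- (H *v x) = l *s x"
    by (auto simp: uminus_matrix_vector_mult)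
  from x(2) have "H *v x = (- l) *s x" by (simp add: vec_eq_iff) (metis minus_minus)
  moreover have "(- l) * (y \<bullet> y) \<le> y \<bullet> (H *v y)" for y
    using le[rule_format, of y] by (simp add: uminus_matrix_vector_mult)
  ultimately show ?thesis using x(1) by blast
qed

lemma lambda_min_eigenvalue:
  fixes H :: "real^'n^'n"
  assumes "transpose H = H"
  shows "lambda_min H \<in> eigenvalues H"
  unfolding lambda_min_def
  using finite_eigenvalues symmetric_rayleigh_min_eigenvalue[OF assms] by (intro Min_in) auto

lemma lambda_min_le_quadratic_form:
  fixes H :: "real^'n^'n"
  assumes "transpose H = H"
  shows "lambda_min H * (y \<bullet> y) \<le> y \<bullet> (H *v y)"
proof -
  obtain l where l: "l \<in> eigenvalues H" "\<forall>y. l * (y \<bullet> y) \<le> y \<bullet> (H *v y)"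
    using symmetric_rayleigh_min_eigenvalue[OF assms] by blast
  have "lambda_min H \<le> l" unfolding lambda_min_def using finite_eigenvalues l(1) by (rule Min_le)
  hence "lambda_min H * (y \<bullet> y) \<le> l * (y \<bullet> y)" by (simp add: mult_right_mono)
  with l(2) show ?thesis by (meson order_trans)
qed

lemma lambda_min_pos:
  fixes H :: "real^'n^'n"
  assumes "transpose H = H" and "\<forall>x. x \<noteq> 0 \<longrightarrow> x \<bullet> (H *v x) > 0"
  shows "lambda_min H > 0"
proof -
  obtain x where "x \<noteq> 0" "H *v x = lambda_min H *s x" using lambda_min_eigenvalue[OF assms(1)] by blast
  hence "0 < lambda_min H * (x \<bullet> x)" "x \<bullet> x > 0"
    using assms(2) by (auto simp: scalar_mult_eq_scaleR)
  thus ?thesis by (simp add: zero_less_mult_iff)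
qed

lemma lambda_min_nonneg:
  fixes H :: "real^'n^'n"
  assumes "transpose H = H" and "\<forall>x. x \<bullet> (H *v x) \<ge> 0"
  shows "lambda_min H \<ge> 0"
proof -
  obtain x where "x \<noteq> 0" "H *v x = lambda_min H *s x" using lambda_min_eigenvalue[OF assms(1)] by blast
  hence "0 \<le> lambda_min H * (x \<bullet> x)" "x \<bullet> x > 0"
    using assms(2)[rule_format, of x] by (auto simp: scalar_mult_eq_scaleR)
  thus ?thesis by (simp add: zero_le_mult_iff)
qed

section \<open>Spectral radius\<close>

lemma eigenvalue_norm_le_spec_radius:
  fixes M :: "real^'n^'n"
  assumes "l \<in> eigenvalues (cmat M)"
  shows "cmod l \<le> spec_radius M"
  unfolding spec_radius_def
proof (rule Max_ge)
  have "{cmod l |l. \<exists>x. x \<noteq> 0 \<and> cmat M *v x = l *s x} = cmod ` eigenvalues (cmat M)" by blast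
  thus "finite {cmod l |l. \<exists>x. x \<noteq> 0 \<and> cmat M *v x = l *s x}"
    by (simp add: finite_eigenvalues)
qed (use assms in blast)

definition cvec :: "real^'n \<Rightarrow> complex^'n" where
  "cvec x = (\<chi> i. complex_of_real (x $ i))"

lemma cmat_cvec: "cmat M *v cvec x = cvec (M *v x)"
  by (simp add: vec_eq_iff matrix_vector_mult_def cmat_def cvec_def)

lemma cvec_eq_0_iff [simp]: "cvec x = 0 \<longleftrightarrow> x = 0"
  by (simp add: vec_eq_iff cvec_def)

lemma real_eigenvalue_le_spec_radius:
  fixes M :: "real^'n^'n"
  assumes "l \<in> eigenvalues M"
  shows "\<bar>l\<bar> \<le> spec_radius M"
proof -
  obtain x where "x \<noteq> 0" "M *v x = l *s x" using assms by blast
  hence "cmat M *v cvec x = of_real l *s cvec x"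
    by (simp only: cmat_cvec) (simp add: vec_eq_iff cvec_def)
  moreover have "cvec x \<noteq> 0" using \<open>x \<noteq> 0\<close> by simp
  ultimately have "of_real l \<in> eigenvalues (cmat M)" by blast
  from eigenvalue_norm_le_spec_radius[OF this] show ?thesis by simp
qed

lemma quadratic_form_le_spec_radius:
  fixes H :: "real^'n^'n"
  assumes "transpose H = H"
  shows "y \<bullet> (H *v y) \<le> spec_radius H * (y \<bullet> y)"
proof -
  obtain l where l: "l \<in> eigenvalues H" "\<forall>y. y \<bullet> (H *v y) \<le> l * (y \<bullet> y)"
    using symmetric_rayleigh_max_eigenvalue[OF assms] by blast
  have "l \<le> spec_radius H" using real_eigenvalue_le_spec_radius[OF l(1)] by simp
  hence "l * (y \<bullet> y) \<le> spec_radius H * (y \<bullet> y)" by (simp add: mult_right_mono)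
  with l(2) show ?thesis by (meson order_trans)
qed

text \<open>If \<open>S\<^sup>2 e = -r\<^sup>2 e\<close> then \<open>S e + i r e\<close> is an eigenvector of \<open>S\<close> for the eigenvalue \<open>i r\<close>.\<close>
lemma sqrt_neg_eigenvalue_of_square_le_spec_radius:
  fixes S :: "real^'n^'n"
  assumes "e \<noteq> 0" "S *v (S *v e) = (- (r^2)) *s e" "r \<ge> 0"
  shows "r \<le> spec_radius S"
proof (cases "r = 0")
  case True
  have "0 \<in> eigenvalues (cmat S)"
  proof (cases "S *v e = 0")
    case True
    with assms(1) show ?thesis by (intro CollectI exI[of _ "cvec e"]) (simp add: cmat_cvec)
  next
    case False
    with assms(2) \<open>r = 0\<close> show ?thesis
      by (intro CollectI exI[of _ "cvec (S *v e)"]) (simp add: cmat_cvec)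
  qed
  from eigenvalue_norm_le_spec_radius[OF this] True show ?thesis by simp
next
  case False
  define w where "w = cvec (S *v e) + (\<i> * of_real r) *s cvec e"
  obtain i where "e $ i \<noteq> 0" using assms(1) by (auto simp: vec_eq_iff)
  hence "Im (w $ i) \<noteq> 0" using False by (simp add: w_def cvec_def)
  hence "w \<noteq> 0" by auto
  have "cmat S *v w = cvec (S *v (S *v e)) + (\<i> * of_real r) *s cvec (S *v e)"
    unfolding w_def by (simp add: matrix_vector_right_distrib vec.scale cmat_cvec)
  also have "\<dots> = (\<i> * of_real r) *s w"
    unfolding assms(2) w_def
    by (simp add: vec_eq_iff cvec_def complex_eq_iff power2_eq_square algebra_simps)
  finally have "cmod (\<i> * of_real r) \<le> spec_radius S"
    using \<open>w \<noteq> 0\<close> by (intro eigenvalue_norm_le_spec_radius) blast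
  thus ?thesis using assms(3) by (simp add: norm_mult)
qed

lemma skew_bilinear_form_le_spec_radius:
  fixes S :: "real^'n^'n"
  assumes skew: "transpose S = - S"
  shows "2 * \<bar>x \<bullet> (S *v y)\<bar> \<le> spec_radius S * (x \<bullet> x + y \<bullet> y)"
proof -
  have norm_Sv: "(S *v z) \<bullet> (S *v z) = z \<bullet> ((transpose S ** S) *v z)" for z
    by (simp only: matrix_vector_mul_assoc[symmetric] inner_matrix_vector_transpose transpose_transpose)
  have "transpose (transpose S ** S) = transpose S ** S" by (simp add: matrix_transpose_mul)
  then obtain l where l: "l \<in> eigenvalues (transpose S ** S)"
      and le: "\<forall>z. z \<bullet> ((transpose S ** S) *v z) \<le> l * (z \<bullet> z)"
    using symmetric_rayleigh_max_eigenvalue by blast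
  then obtain e where e: "e \<noteq> 0" "(transpose S ** S) *v e = l *s e" by blast
  have "l * (e \<bullet> e) = (S *v e) \<bullet> (S *v e)" using e(2) norm_Sv[of e] by (simp add: scalar_mult_eq_scaleR)
  hence "l * (e \<bullet> e) \<ge> 0" by simp
  moreover have "e \<bullet> e > 0" using e(1) by simp
  ultimately have "l \<ge> 0" by (simp add: zero_le_mult_iff)
  define \<sigma> where "\<sigma> = sqrt l"
  have \<sigma>: "\<sigma> \<ge> 0" "\<sigma>^2 = l" using \<open>l \<ge> 0\<close> by (simp_all add: \<sigma>_def)
  have "(transpose S ** S) *v e = (- S) *v (S *v e)"
    using skew by (simp add: matrix_vector_mul_assoc)
  hence "S *v (S *v e) = - ((transpose S ** S) *v e)" by (simp add: uminus_matrix_vector_mult)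
  hence "S *v (S *v e) = (- (\<sigma>^2)) *s e" using e(2) \<sigma>(2) by (simp add: vec_eq_iff)
  hence \<sigma>_le: "\<sigma> \<le> spec_radius S" using e(1) \<sigma>(1) by (intro sqrt_neg_eigenvalue_of_square_le_spec_radius)
  have "(norm (S *v y))^2 \<le> (\<sigma> * norm y)^2"
    using le norm_Sv[of y] \<sigma>(2) by (simp add: power_mult_distrib power2_norm_eq_inner)
  hence Sy: "norm (S *v y) \<le> \<sigma> * norm y" using \<sigma>(1) by (simp add: power2_le_iff_abs_le)
  have "\<bar>x \<bullet> (S *v y)\<bar> \<le> norm x * norm (S *v y)" by (rule Cauchy_Schwarz_ineq2)
  also have "\<dots> \<le> norm x * (\<sigma> * norm y)" using Sy by (intro mult_left_mono) simp_all
  finally have "2 * \<bar>x \<bullet> (S *v y)\<bar> \<le> 2 * (norm x * (\<sigma> * norm y))" by simp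
  also have "\<dots> = \<sigma> * (2 * norm x * norm y)" by simp
  also have "\<dots> \<le> \<sigma> * ((norm x)^2 + (norm y)^2)"
    using \<sigma>(1) by (intro mult_left_mono) (auto simp: sum_squares_bound)
  also have "\<dots> \<le> spec_radius S * ((norm x)^2 + (norm y)^2)" using \<sigma>_le by (intro mult_right_mono) simp_all
  finally show ?thesis by (simp add: power2_norm_eq_inner)
qed

section \<open>Rayleigh quotients at complex vectors\<close>

definition re_vec :: "complex^'n \<Rightarrow> real^'n" where
  "re_vec u = (\<chi> i. Re (u $ i))"

definition im_vec :: "complex^'n \<Rightarrow> real^'n" where
  "im_vec u = (\<chi> i. Im (u $ i))"

abbreviation rayleigh_quotient :: "real^'n^'n \<Rightarrow> complex^'n \<Rightarrow> complex" where
  "rayleigh_quotient M u \<equiv> cdot u (cmat M *v u) / cdot u u"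

lemma re_vec_im_vec_eq_0_iff: "re_vec u = 0 \<and> im_vec u = 0 \<longleftrightarrow> u = 0"
  by (auto simp: vec_eq_iff re_vec_def im_vec_def complex_eq_iff)

lemma re_vec_cmat: "re_vec (cmat M *v u) = M *v re_vec u"
  by (simp add: vec_eq_iff re_vec_def cmat_def matrix_vector_mult_def Re_sum)

lemma im_vec_cmat: "im_vec (cmat M *v u) = M *v im_vec u"
  by (simp add: vec_eq_iff im_vec_def cmat_def matrix_vector_mult_def Im_sum)

lemma cdot_self_eq: "cdot u u = of_real (re_vec u \<bullet> re_vec u + im_vec u \<bullet> im_vec u)"
  by (simp add: complex_eq_iff cdot_def inner_vec_def re_vec_def im_vec_def Re_sum Im_sum
      sum.distrib[symmetric] power2_eq_square algebra_simps)

lemma cdot_self_pos: "u \<noteq> 0 \<Longrightarrow> re_vec u \<bullet> re_vec u + im_vec u \<bullet> im_vec u > 0"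
  using re_vec_im_vec_eq_0_iff[of u]
  by (metis add_nonneg_pos add_pos_nonneg inner_ge_zero inner_gt_zero_iff order_le_less)

lemma cdot_cmat_self:
  fixes M :: "real^'n^'n" and u :: "complex^'n"
  defines "x \<equiv> re_vec u" and "y \<equiv> im_vec u"
  shows "cdot u (cmat M *v u) = Complex (x \<bullet> (M *v x) + y \<bullet> (M *v y)) (x \<bullet> (M *v y) - y \<bullet> (M *v x))"
  by (simp add: x_def y_def complex_eq_iff cdot_def cmat_def matrix_vector_mult_def inner_vec_def
      re_vec_def im_vec_def Re_sum Im_sum sum_distrib_left sum_subtractf[symmetric]
      sum.distrib[symmetric] algebra_simps)

lemma rayleigh_quotient_eq:
  fixes M :: "real^'n^'n" and u :: "complex^'n"
  defines "x \<equiv> re_vec u" and "y \<equiv> im_vec u"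
  shows "rayleigh_quotient M u = Complex ((x \<bullet> (M *v x) + y \<bullet> (M *v y)) / (x \<bullet> x + y \<bullet> y))
                                         ((x \<bullet> (M *v y) - y \<bullet> (M *v x)) / (x \<bullet> x + y \<bullet> y))"
  unfolding cdot_cmat_self cdot_self_eq x_def y_def by (simp add: complex_eq_iff)

lemma cdot_scale: "cdot u (a *s w) = a * cdot u w"
  by (simp add: cdot_def sum_distrib_left mult_ac)

lemma cdot_add: "cdot u (w + w') = cdot u w + cdot u w'"
  by (simp add: cdot_def sum.distrib algebra_simps)

lemma cdot_uminus: "cdot u (- w) = - cdot u w"
  by (simp add: cdot_def sum_negf)

lemma cdot_diff: "cdot u (w - w') = cdot u w - cdot u w'"
  by (simp add: cdot_def sum_subtractf algebra_simps)

lemma cdot_cmat_adjoint: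
  fixes B :: "real^'n^'m"
  shows "cdot u (cmat B *v v) = cdot (cmat (transpose B) *v u) v"
  unfolding cdot_def cmat_def matrix_vector_mult_def transpose_def
  by (simp add: sum_distrib_left sum_distrib_right cnj_sum mult_ac) (rule sum.swap)

lemma Re_rayleigh_quotient_bounds:
  fixes H :: "real^'n^'n"
  assumes "transpose H = H" "u \<noteq> 0"
  shows "lambda_min H \<le> Re (rayleigh_quotient H u)" "Re (rayleigh_quotient H u) \<le> spec_radius H"
proof -
  define x y where "x = re_vec u" and "y = im_vec u"
  have pos: "x \<bullet> x + y \<bullet> y > 0" using cdot_self_pos[OF assms(2)] by (simp add: x_def y_def)
  have "lambda_min H * (x \<bullet> x + y \<bullet> y) \<le> x \<bullet> (H *v x) + y \<bullet> (H *v y)"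
    using lambda_min_le_quadratic_form[OF assms(1), of x] lambda_min_le_quadratic_form[OF assms(1), of y]
    by (simp add: distrib_left)
  moreover have "x \<bullet> (H *v x) + y \<bullet> (H *v y) \<le> spec_radius H * (x \<bullet> x + y \<bullet> y)"
    using quadratic_form_le_spec_radius[OF assms(1), of x] quadratic_form_le_spec_radius[OF assms(1), of y]
    by (simp add: distrib_left)
  ultimately show "lambda_min H \<le> Re (rayleigh_quotient H u)" "Re (rayleigh_quotient H u) \<le> spec_radius H"
    using pos by (simp_all add: rayleigh_quotient_eq x_def[symmetric] y_def[symmetric] field_simps)
qed

lemma quadratic_form_symmetric_part:
  fixes A :: "real^'n^'n"
  shows "z \<bullet> (((1/2) *\<^sub>R (A + transpose A)) *v z) = z \<bullet> (A *v z)"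
  using inner_matrix_vector_transpose[of z "transpose A" z]
  by (simp add: scaleR_matrix_vector_mult matrix_vector_mult_add_rdistrib
      inner_add_right inner_commute)

lemma quadratic_form_gram:
  fixes B :: "real^'n^'m"
  shows "z \<bullet> ((B ** transpose B) *v z) = (transpose B *v z) \<bullet> (transpose B *v z)"
  by (simp only: matrix_vector_mul_assoc[symmetric] inner_matrix_vector_transpose)

lemma Re_rayleigh_quotient_symmetric_part:
  fixes A :: "real^'n^'n"
  shows "Re (rayleigh_quotient A u) = Re (rayleigh_quotient ((1/2) *\<^sub>R (A + transpose A)) u)"
  by (simp add: rayleigh_quotient_eq quadratic_form_symmetric_part)

lemma Im_rayleigh_quotient_le_spec_radius:
  fixes A :: "real^'n^'n"
  assumes "u \<noteq> 0"
  shows "\<bar>Im (rayleigh_quotient A u)\<bar> \<le> spec_radius ((1/2) *\<^sub>R (A - transpose A))"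
proof -
  define S where "S = (1/2) *\<^sub>R (A - transpose A)"
  define x y where "x = re_vec u" and "y = im_vec u"
  have "transpose S = - S" by (simp add: S_def vec_eq_iff transpose_def algebra_simps)
  have "2 * (x \<bullet> (S *v y)) = x \<bullet> (A *v y) - y \<bullet> (A *v x)"
    using inner_matrix_vector_transpose[of x "transpose A" y]
    by (simp add: S_def scaleR_matrix_vector_mult matrix_vector_mult_diff_rdistrib
        inner_diff_right inner_commute)
  hence "\<bar>x \<bullet> (A *v y) - y \<bullet> (A *v x)\<bar> \<le> spec_radius S * (x \<bullet> x + y \<bullet> y)"
    using skew_bilinear_form_le_spec_radius[OF \<open>transpose S = - S\<close>, of x y] by simp
  moreover have "x \<bullet> x + y \<bullet> y > 0" using cdot_self_pos[OF assms] by (simp add: x_def y_def)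
  ultimately have "\<bar>x \<bullet> (A *v y) - y \<bullet> (A *v x)\<bar> / (x \<bullet> x + y \<bullet> y) \<le> spec_radius S"
    by (simp add: pos_divide_le_eq)
  thus ?thesis
    by (simp add: rayleigh_quotient_eq x_def[symmetric] y_def[symmetric] S_def[symmetric] abs_divide)
qed

lemma rayleigh_quotient_symmetric:
  fixes H :: "real^'n^'n"
  assumes "transpose H = H"
  shows "rayleigh_quotient H u = of_real (Re (rayleigh_quotient H u))"
proof -
  have "x \<bullet> (H *v y) = y \<bullet> (H *v x)" for x y
    using inner_matrix_vector_transpose[of x H y] assms by (simp add: inner_commute)
  thus ?thesis by (simp add: rayleigh_quotient_eq complex_eq_iff)
qed

lemma Re_rayleigh_quotient_gram_pos:
  fixes B :: "real^'n^'m"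
  assumes "cmat (transpose B) *v u \<noteq> 0"
  shows "Re (rayleigh_quotient (B ** transpose B) u) > 0"
proof -
  define x y where "x = re_vec u" and "y = im_vec u"
  have "x \<bullet> ((B ** transpose B) *v x) + y \<bullet> ((B ** transpose B) *v y) > 0"
    using cdot_self_pos[OF assms] by (simp add: quadratic_form_gram re_vec_cmat im_vec_cmat x_def y_def)
  moreover have "u \<noteq> 0" using assms by auto
  hence "x \<bullet> x + y \<bullet> y > 0" using cdot_self_pos[of u] by (simp add: x_def y_def)
  ultimately show ?thesis by (simp add: rayleigh_quotient_eq x_def[symmetric] y_def[symmetric])
qed

section \<open>Block structure of the saddle point matrices\<close>

definition block_mat ::
    "'a^'q^'p \<Rightarrow> 'a^'s^'p \<Rightarrow> 'a^'q^'r \<Rightarrow> 'a^'s^'r \<Rightarrow> 'a^('q + 's)^('p + 'r)" where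
  "block_mat M11 M12 M21 M22 = (\<chi> i j. case i of
       Inl p \<Rightarrow> (case j of Inl q \<Rightarrow> M11 $ p $ q | Inr q \<Rightarrow> M12 $ p $ q)
     | Inr p \<Rightarrow> (case j of Inl q \<Rightarrow> M21 $ p $ q | Inr q \<Rightarrow> M22 $ p $ q))"

definition top_vec :: "'a^('m::finite + 'n::finite) \<Rightarrow> 'a^'m" where
  "top_vec z = (\<chi> p. z $ Inl p)"

definition bot_vec :: "'a^('m::finite + 'n::finite) \<Rightarrow> 'a^'n" where
  "bot_vec z = (\<chi> q. z $ Inr q)"

lemma top_vec_stack [simp]: "top_vec (stack u v) = u"
  and bot_vec_stack [simp]: "bot_vec (stack u v) = v"
  by (simp_all add: vec_eq_iff top_vec_def bot_vec_def stack_def)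

lemma top_vec_scale [simp]: "top_vec (c *s z) = c *s top_vec z"
  and bot_vec_scale [simp]: "bot_vec (c *s z) = c *s bot_vec z"
  by (simp_all add: vec_eq_iff top_vec_def bot_vec_def)

lemma top_vec_zero [simp]: "top_vec 0 = 0"
  and bot_vec_zero [simp]: "bot_vec 0 = 0"
  by (simp_all add: vec_eq_iff top_vec_def bot_vec_def)

lemma top_vec_bot_vec_eq_0_iff: "top_vec z = 0 \<and> bot_vec z = 0 \<longleftrightarrow> z = 0"
  by (auto simp: vec_eq_iff top_vec_def bot_vec_def) (metis sum.exhaust)

lemma sum_UNIV_Plus:
  fixes g :: "('m::finite + 'n::finite) \<Rightarrow> 'a::comm_monoid_add"
  shows "(\<Sum>i\<in>UNIV. g i) = (\<Sum>p\<in>UNIV. g (Inl p)) + (\<Sum>q\<in>UNIV. g (Inr q))"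
  by (subst UNIV_Plus_UNIV[symmetric], subst sum.Plus) auto

lemma top_vec_block_mat_mult:
  fixes M11 :: "'a::semiring_1^'q^'p"
  shows "top_vec (block_mat M11 M12 M21 M22 *v z) = M11 *v top_vec z + M12 *v bot_vec z"
  by (simp add: vec_eq_iff top_vec_def bot_vec_def block_mat_def matrix_vector_mult_def sum_UNIV_Plus)

lemma bot_vec_block_mat_mult:
  fixes M11 :: "'a::semiring_1^'q^'p"
  shows "bot_vec (block_mat M11 M12 M21 M22 *v z) = M21 *v top_vec z + M22 *v bot_vec z"
  by (simp add: vec_eq_iff top_vec_def bot_vec_def block_mat_def matrix_vector_mult_def sum_UNIV_Plus)

lemma cmat_block_mat:
  "cmat (block_mat M11 M12 M21 M22) = block_mat (cmat M11) (cmat M12) (cmat M21) (cmat M22)"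
  by (simp add: vec_eq_iff cmat_def block_mat_def split: sum.split)

lemma saddle_mat_block: "saddle_mat A B = block_mat A B (- transpose B) 0"
  by (simp add: vec_eq_iff saddle_mat_def block_mat_def transpose_def split: sum.split)

lemma P_MGSSP_block:
  "P_MGSSP \<alpha> \<beta> A B
     = block_mat (\<alpha> *\<^sub>R mat 1 + 2 *\<^sub>R A) (2 *\<^sub>R B) (- 2 *\<^sub>R transpose B) (\<beta> *\<^sub>R mat 1)"
  by (simp add: vec_eq_iff P_MGSSP_def block_mat_def transpose_def mat_def split: sum.split)

lemma cmat_add: "cmat (M + N) = cmat M + cmat N"
  and cmat_uminus: "cmat (- M) = - cmat M"
  and cmat_mat: "cmat (mat 1) = mat 1"
  and cmat_zero: "cmat 0 = 0"
  and cmat_mult: "cmat (X ** Y) = cmat X ** cmat Y"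
  by (simp_all add: vec_eq_iff cmat_def mat_def matrix_matrix_mult_def)

lemma cmat_scaleR: "cmat (c *\<^sub>R M) = c *\<^sub>R cmat M"
  by (simp add: vec_eq_iff cmat_def complex_eq_iff)

lemma P_MGSSP_mult_eq_0:
  assumes "pos_def A" "\<alpha> \<ge> 0" "\<beta> > 0" and "P_MGSSP \<alpha> \<beta> A B *v z = 0"
  shows "z = 0"
proof -
  define x y where "x = top_vec z" and "y = bot_vec z"
  have top: "\<alpha> *\<^sub>R x + 2 *\<^sub>R (A *v x) + 2 *\<^sub>R (B *v y) = 0"
    and bot: "- 2 *\<^sub>R (transpose B *v x) + \<beta> *\<^sub>R y = 0"
    using arg_cong[OF assms(4), of top_vec] arg_cong[OF assms(4), of bot_vec]
    by (simp_all add: P_MGSSP_block top_vec_block_mat_mult bot_vec_block_mat_mult x_def y_def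
        matrix_vector_mult_add_rdistrib scaleR_matrix_vector_mult matrix_vector_mul_lid
        uminus_matrix_vector_mult del: transpose_matrix_vector)
  from bot have y: "y = (2 / \<beta>) *\<^sub>R (transpose B *v x)"
    using assms(3) by (auto simp: vec_eq_iff field_simps del: transpose_matrix_vector)
  from top have "x \<bullet> (\<alpha> *\<^sub>R x + 2 *\<^sub>R (A *v x) + 2 *\<^sub>R (B *v y)) = 0" by simp
  hence "\<alpha> * (x \<bullet> x) + 2 * (x \<bullet> (A *v x)) + 2 * (x \<bullet> (B *v y)) = 0"
    by (simp add: inner_add_right)
  moreover have "x \<bullet> (B *v y) = (2 / \<beta>) * ((transpose B *v x) \<bullet> (transpose B *v x))"
    using inner_matrix_vector_transpose[of x B y] by (simp add: y)
  moreover have "0 \<le> (2 / \<beta>) * ((transpose B *v x) \<bullet> (transpose B *v x))" "0 \<le> \<alpha> * (x \<bullet> x)"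
    using assms(2,3) by simp_all
  ultimately have "x \<bullet> (A *v x) \<le> 0" by linarith
  hence "x = 0" using assms(1) unfolding pos_def_def by (meson not_le)
  with y show ?thesis using top_vec_bot_vec_eq_0_iff[of z] by (simp add: x_def y_def)
qed

lemma P_MGSSP_invertible:
  assumes "pos_def A" "\<alpha> \<ge> 0" "\<beta> > 0"
  shows "invertible (P_MGSSP \<alpha> \<beta> A B)"
proof -
  have "\<exists>B'. B' ** P_MGSSP \<alpha> \<beta> A B = mat 1"
    unfolding matrix_left_invertible_ker using P_MGSSP_mult_eq_0[OF assms] by blast
  thus ?thesis using invertible_left_inverse by blast
qed

section \<open>The eigenvalue equation\<close>

lemma matrix_inv_right:
  assumes "invertible M"
  shows "M ** matrix_inv M = mat 1"
  using assms unfolding invertible_def matrix_inv_def by (rule someI_ex[THEN conjunct1])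

lemma MGSSP_eigenvector_equations:
  fixes A :: "real^'m^'m" and B :: "real^'n^'m"
  assumes "invertible (P_MGSSP \<alpha> \<beta> A B)"
    and "cmat (matrix_inv (P_MGSSP \<alpha> \<beta> A B) ** saddle_mat A B) *v stack u v = lam *s stack u v"
  shows "cmat A *v u + cmat B *v v
           = lam *s (of_real \<alpha> *s u + 2 *s (cmat A *v u) + 2 *s (cmat B *v v))"
    and "- (cmat (transpose B) *v u) = lam *s (- 2 *s (cmat (transpose B) *v u) + of_real \<beta> *s v)"
proof -
  let ?P = "P_MGSSP \<alpha> \<beta> A B"
  have "cmat (saddle_mat A B) *v stack u v = cmat (?P ** (matrix_inv ?P ** saddle_mat A B)) *v stack u v"
    by (simp add: matrix_mul_assoc matrix_inv_right[OF assms(1)])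
  also have "\<dots> = lam *s (cmat ?P *v stack u v)"
    using assms(2) by (simp add: cmat_mult matrix_vector_mul_assoc[symmetric] vec.scale)
  finally have eq: "cmat (saddle_mat A B) *v stack u v = lam *s (cmat ?P *v stack u v)" .
  have scale: "c *\<^sub>R w = of_real c *s w" for c and w :: "complex^'k"
    by (simp add: vec_eq_iff complex_eq_iff)
  show "cmat A *v u + cmat B *v v
          = lam *s (of_real \<alpha> *s u + 2 *s (cmat A *v u) + 2 *s (cmat B *v v))"
    using arg_cong[OF eq, of top_vec]
    by (simp add: saddle_mat_block P_MGSSP_block cmat_block_mat top_vec_block_mat_mult cmat_add
        cmat_scaleR cmat_mat matrix_vector_mult_add_rdistrib scaleR_matrix_vector_mult
        matrix_vector_mul_lid scale vec.scale)
  show "- (cmat (transpose B) *v u) = lam *s (- 2 *s (cmat (transpose B) *v u) + of_real \<beta> *s v)"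
    using arg_cong[OF eq, of bot_vec]
    by (simp add: saddle_mat_block P_MGSSP_block cmat_block_mat bot_vec_block_mat_mult cmat_add
        cmat_scaleR cmat_mat cmat_uminus cmat_zero uminus_matrix_vector_mult
        scaleR_matrix_vector_mult matrix_vector_mul_lid scale vec.scale
        del: transpose_matrix_vector)
qed

lemma MGSSP_eigenvalue_quadratic:
  fixes A :: "real^'m^'m" and B :: "real^'n^'m"
  assumes "invertible (P_MGSSP \<alpha> \<beta> A B)"
    and "cmat (matrix_inv (P_MGSSP \<alpha> \<beta> A B) ** saddle_mat A B) *v stack u v = lam *s stack u v"
    and "u \<noteq> 0"
  shows "(1 - 2 * lam) * lam * of_real \<beta> * rayleigh_quotient A u - lam^2 * of_real \<alpha> * of_real \<beta>
           - (1 - 2 * lam)^2 * rayleigh_quotient (B ** transpose B) u = 0"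
proof -
  define g where "g = cmat (transpose B) *v u"
  define N W X G where "N = cdot u u" and "W = cdot u (cmat A *v u)" and "X = cdot g v"
    and "G = cdot u (cmat (B ** transpose B) *v u)"
  have "G = cdot g g"
    unfolding G_def g_def by (simp add: cmat_mult matrix_vector_mul_assoc[symmetric] cdot_cmat_adjoint)
  have top: "W + X = lam * (of_real \<alpha> * N + 2 * W + 2 * X)"
    using arg_cong[OF MGSSP_eigenvector_equations(1)[OF assms(1,2)], of "cdot u"]
    by (simp add: cdot_add cdot_scale cdot_cmat_adjoint[of u B v] N_def W_def X_def g_def
        distrib_left mult.assoc)
  have bot: "- G = lam * (- 2 * G + of_real \<beta> * X)"
    using arg_cong[OF MGSSP_eigenvector_equations(2)[OF assms(1,2)], of "cdot g"]
    by (simp add: cdot_add cdot_diff cdot_scale cdot_uminus \<open>G = cdot g g\<close> X_def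
        algebra_simps flip: g_def)
  have "N \<noteq> 0"
    unfolding N_def cdot_self_eq using cdot_self_pos[OF assms(3)] by (metis of_real_eq_0_iff less_irrefl)
  moreover have "(1 - 2 * lam) * lam * of_real \<beta> * W - lam^2 * of_real \<alpha> * of_real \<beta> * N
                   - (1 - 2 * lam)^2 * G = 0"
    using top bot by algebra
  ultimately show ?thesis unfolding N_def[symmetric] W_def[symmetric] G_def[symmetric]
    by (simp add: field_simps)
qed

section \<open>Solving the quadratic and bounding its roots\<close>

lemma Complex_sqrt_formula_square:
  fixes a b s :: real
  assumes "s = 1 \<or> s = -1" and "s * \<bar>b\<bar> = b"
  shows "(Complex (sqrt ((sqrt (a^2 + b^2) + a) / 2)) (s * sqrt ((sqrt (a^2 + b^2) - a) / 2)))^2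
           = Complex a b"
proof -
  define r p q where "r = sqrt (a^2 + b^2)" and "p = (r + a) / 2" and "q = (r - a) / 2"
  have "\<bar>a\<bar> \<le> r" unfolding r_def by (rule real_sqrt_ge_abs1[unfolded power2_eq_square[symmetric]])
  hence "0 \<le> p" "0 \<le> q" by (simp_all add: p_def q_def)
  have "(2 * sqrt p * sqrt q)^2 = r^2 - a^2"
    using \<open>0 \<le> p\<close> \<open>0 \<le> q\<close> by (simp add: power_mult_distrib p_def q_def field_simps power2_eq_square)
  also have "\<dots> = \<bar>b\<bar>^2" by (simp add: r_def)
  finally have "2 * sqrt p * sqrt q = \<bar>b\<bar>"
    using \<open>0 \<le> p\<close> \<open>0 \<le> q\<close>
    by (metis abs_ge_zero mult_nonneg_nonneg real_sqrt_ge_zero zero_le_numeral power2_eq_iff_nonneg)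
  moreover have "(sqrt p)^2 - (s * sqrt q)^2 = a"
    using \<open>0 \<le> p\<close> \<open>0 \<le> q\<close> assms(1) by (auto simp: power_mult_distrib p_def q_def field_simps)
  ultimately have "(Complex (sqrt p) (s * sqrt q))^2 = Complex a b"
    using assms(2) by (simp add: complex_eq_iff power2_eq_square algebra_simps)
  thus ?thesis by (simp add: p_def q_def r_def)
qed

lemma MGSSP_quadratic_roots:
  fixes \<alpha> \<beta> a1 b1 c1 z1 z2 :: real and lam D :: complex
  assumes quad: "(1 - 2 * lam) * lam * of_real \<beta> * Complex a1 b1 - lam^2 * of_real \<alpha> * of_real \<beta>
                   - (1 - 2 * lam)^2 * of_real c1 = 0"
    and D: "D = Complex (\<alpha> * \<beta> + 2 * \<beta> * a1 + 4 * c1) (2 * \<beta> * b1)" and "D \<noteq> 0"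
    and root: "(Complex z1 z2)^2 = Complex (\<beta>^2 * (a1^2 - b1^2) - 4 * \<alpha> * \<beta> * c1) (2 * \<beta>^2 * a1 * b1)"
  shows "lam = 1/2 + Complex (z1 - \<alpha> * \<beta> - \<beta> * a1) (z2 - \<beta> * b1) / (2 * D)
       \<or> lam = 1/2 - Complex (z1 + \<alpha> * \<beta> + \<beta> * a1) (z2 + \<beta> * b1) / (2 * D)"
proof -
  define w c Z F where "w = Complex a1 b1" and "c = complex_of_real c1" and "Z = Complex z1 z2"
    and "F = of_real \<alpha> * of_real \<beta> + of_real \<beta> * w"
  have D': "D = of_real \<alpha> * of_real \<beta> + 2 * of_real \<beta> * w + 4 * c"
    by (simp add: D w_def c_def complex_eq_iff)
  have "Z^2 = of_real \<beta>^2 * w^2 - 4 * of_real \<alpha> * of_real \<beta> * c"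
    using root by (simp add: Z_def w_def c_def complex_eq_iff power2_eq_square algebra_simps)
  hence "(D * (2 * lam - 1) + F)^2 = Z^2"
    using quad unfolding D' F_def w_def[symmetric] c_def[symmetric] by algebra
  hence "D * (2 * lam - 1) + F = Z \<or> D * (2 * lam - 1) + F = - Z" by (simp add: power2_eq_iff)
  hence "D * (2 * lam - 1) = Z - F \<or> D * (2 * lam - 1) = - (Z + F)" by (auto simp: algebra_simps)
  hence "lam = 1/2 + (Z - F) / (2 * D) \<or> lam = 1/2 - (Z + F) / (2 * D)"
    using \<open>D \<noteq> 0\<close> by (auto simp: field_simps)
  moreover have "Z - F = Complex (z1 - \<alpha> * \<beta> - \<beta> * a1) (z2 - \<beta> * b1)"
    and "Z + F = Complex (z1 + \<alpha> * \<beta> + \<beta> * a1) (z2 + \<beta> * b1)"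
    by (simp_all add: Z_def F_def w_def complex_eq_iff)
  ultimately show ?thesis by simp
qed

lemma MGSSP_root_part_bounds:
  fixes \<alpha> \<beta> a1 b1 c1 a2 b2 z1 z2 s :: real
  assumes "\<beta> > 0" "\<alpha> \<ge> 0" "a1 > 0" "c1 \<ge> 0"
    and a2: "a2 = \<beta>^2 * (a1^2 - b1^2) - 4 * \<alpha> * \<beta> * c1" and b2: "b2 = 2 * \<beta>^2 * a1 * b1"
    and z1: "z1 = sqrt ((sqrt (a2^2 + b2^2) + a2) / 2)"
    and z2: "z2 = s * sqrt ((sqrt (a2^2 + b2^2) - a2) / 2)" and s: "s = 1 \<or> s = -1"
  shows "0 \<le> z1" "z1 \<le> \<beta> * a1" "\<bar>z2\<bar> \<le> sqrt (\<beta>^2 * b1^2 + 4 * \<alpha> * \<beta> * c1)"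
proof -
  define r R where "r = sqrt (a2^2 + b2^2)" and "R = \<beta>^2 * (a1^2 + b1^2) + 4 * \<alpha> * \<beta> * c1"
  have K: "4 * \<alpha> * \<beta> * c1 \<ge> 0" using assms by simp
  have "(4 * \<alpha> * \<beta> * c1) * (\<beta>^2 * (a1^2 - b1^2)) \<ge> - ((4 * \<alpha> * \<beta> * c1) * (\<beta>^2 * (a1^2 + b1^2)))"
    using mult_left_mono[OF _ K, of "- (\<beta>^2 * (a1^2 + b1^2))" "\<beta>^2 * (a1^2 - b1^2)"]
    by (simp add: algebra_simps)
  moreover have "a2^2 + b2^2 = (\<beta>^2 * (a1^2 + b1^2))^2
                   - 2 * (4 * \<alpha> * \<beta> * c1) * (\<beta>^2 * (a1^2 - b1^2)) + (4 * \<alpha> * \<beta> * c1)^2"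
    unfolding a2 b2 by algebra
  moreover have "R^2 = (\<beta>^2 * (a1^2 + b1^2))^2
                   + 2 * (4 * \<alpha> * \<beta> * c1) * (\<beta>^2 * (a1^2 + b1^2)) + (4 * \<alpha> * \<beta> * c1)^2"
    unfolding R_def by algebra
  ultimately have "a2^2 + b2^2 \<le> R^2" by linarith
  hence "r \<le> sqrt (R^2)" unfolding r_def by (rule real_sqrt_le_mono)
  hence "r \<le> R" using K by (simp add: R_def)
  have "\<bar>a2\<bar> \<le> r" unfolding r_def by (rule real_sqrt_ge_abs1[unfolded power2_eq_square[symmetric]])
  then show "0 \<le> z1" by (simp add: z1 r_def[symmetric])
  have "(r + a2) / 2 \<le> (\<beta> * a1)^2"
    using \<open>r \<le> R\<close> by (simp add: R_def a2 power2_eq_square algebra_simps)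
  hence "z1 \<le> sqrt ((\<beta> * a1)^2)" unfolding z1 r_def[symmetric] by (rule real_sqrt_le_mono)
  thus "z1 \<le> \<beta> * a1" using assms(1,3) by simp
  have "(r - a2) / 2 \<le> \<beta>^2 * b1^2 + 4 * \<alpha> * \<beta> * c1"
    using \<open>r \<le> R\<close> by (simp add: R_def a2 power2_eq_square algebra_simps)
  moreover have "\<bar>z2\<bar> = sqrt ((r - a2) / 2)"
    using s \<open>\<bar>a2\<bar> \<le> r\<close> by (auto simp: z2 r_def[symmetric] abs_mult)
  ultimately show "\<bar>z2\<bar> \<le> sqrt (\<beta>^2 * b1^2 + 4 * \<alpha> * \<beta> * c1)" by simp
qed

lemma cmod_Complex_div_square:
  "(cmod (Complex x y / (2 * D)))^2 = (x^2 + y^2) / (4 * ((Re D)^2 + (Im D)^2))"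
  by (simp add: norm_divide power_divide norm_mult power_mult_distrib cmod_power2)

lemma MGSSP_root_distance_bounds:
  fixes \<alpha> \<beta> a1 b1 c1 z1 z2 Q :: real and D :: complex
  assumes "\<beta> > 0" "\<alpha> \<ge> 0" "a1 > 0" "c1 > 0"
    and z: "0 \<le> z1" "z1 \<le> \<beta> * a1" "\<bar>z2\<bar> \<le> Q"
    and D: "D = Complex (\<alpha> * \<beta> + 2 * \<beta> * a1 + 4 * c1) (2 * \<beta> * b1)"
  defines "bound \<equiv> ((\<alpha> * \<beta> + 2 * \<beta> * a1)^2 + (\<beta> * \<bar>b1\<bar> + Q)^2)
                     / (4 * ((\<alpha> * \<beta> + 2 * \<beta> * a1 + 4 * c1)^2 + 4 * \<beta>^2 * b1^2))"
  shows "(cmod (Complex (z1 - \<alpha> * \<beta> - \<beta> * a1) (z2 - \<beta> * b1) / (2 * D)))^2 \<le> bound"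
    and "(cmod (Complex (z1 + \<alpha> * \<beta> + \<beta> * a1) (z2 + \<beta> * b1) / (2 * D)))^2 \<le> bound"
proof -
  have den: "4 * ((Re D)^2 + (Im D)^2) = 4 * ((\<alpha> * \<beta> + 2 * \<beta> * a1 + 4 * c1)^2 + 4 * \<beta>^2 * b1^2)"
    by (simp add: D power_mult_distrib)
  have "0 < \<alpha> * \<beta> + 2 * \<beta> * a1 + 4 * c1" using assms(1-4) by (simp add: add_nonneg_pos)
  hence den_pos: "0 < 4 * ((\<alpha> * \<beta> + 2 * \<beta> * a1 + 4 * c1)^2 + 4 * \<beta>^2 * b1^2)"
    by (simp add: add_pos_nonneg)
  have ab: "\<alpha> * \<beta> \<ge> 0" "\<beta> * a1 > 0" "\<bar>\<beta> * b1\<bar> = \<beta> * \<bar>b1\<bar>" using assms(1-3) by (simp_all add: abs_mult)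
  have sq: "x1^2 + y1^2 \<le> (\<alpha> * \<beta> + 2 * \<beta> * a1)^2 + (\<beta> * \<bar>b1\<bar> + Q)^2"
    if "\<bar>x1\<bar> \<le> \<alpha> * \<beta> + 2 * \<beta> * a1" "\<bar>y1\<bar> \<le> \<beta> * \<bar>b1\<bar> + Q" for x1 y1
    using that by (intro add_mono) (simp_all add: abs_le_square_iff power2_le_iff_abs_le)
  have "\<bar>z1 - \<alpha> * \<beta> - \<beta> * a1\<bar> \<le> \<alpha> * \<beta> + 2 * \<beta> * a1" "\<bar>z2 - \<beta> * b1\<bar> \<le> \<beta> * \<bar>b1\<bar> + Q"
    "\<bar>z1 + \<alpha> * \<beta> + \<beta> * a1\<bar> \<le> \<alpha> * \<beta> + 2 * \<beta> * a1" "\<bar>z2 + \<beta> * b1\<bar> \<le> \<beta> * \<bar>b1\<bar> + Q"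
    using ab z by linarith+
  hence "(z1 - \<alpha> * \<beta> - \<beta> * a1)^2 + (z2 - \<beta> * b1)^2 \<le> (\<alpha> * \<beta> + 2 * \<beta> * a1)^2 + (\<beta> * \<bar>b1\<bar> + Q)^2"
    and "(z1 + \<alpha> * \<beta> + \<beta> * a1)^2 + (z2 + \<beta> * b1)^2 \<le> (\<alpha> * \<beta> + 2 * \<beta> * a1)^2 + (\<beta> * \<bar>b1\<bar> + Q)^2"
    by (simp_all add: sq)
  thus "(cmod (Complex (z1 - \<alpha> * \<beta> - \<beta> * a1) (z2 - \<beta> * b1) / (2 * D)))^2 \<le> bound"
    and "(cmod (Complex (z1 + \<alpha> * \<beta> + \<beta> * a1) (z2 + \<beta> * b1) / (2 * D)))^2 \<le> bound"
    using den_pos unfolding bound_def cmod_Complex_div_square den by (simp_all add: divide_right_mono)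
qed

lemma MGSSP_bound_le_spectral_bound:
  fixes \<alpha> \<beta> a1 b1 c1 h \<sigma> \<rho> lH lB :: real
  assumes "\<beta> > 0" "\<alpha> \<ge> 0" "a1 \<le> h" "\<bar>b1\<bar> \<le> \<sigma>" "c1 \<le> \<rho>"
    "0 < lH" "lH \<le> a1" "0 \<le> lB" "lB \<le> c1"
  shows "((\<alpha> * \<beta> + 2 * \<beta> * a1)^2 + (\<beta> * \<bar>b1\<bar> + sqrt (\<beta>^2 * b1^2 + 4 * \<alpha> * \<beta> * c1))^2)
          / (4 * ((\<alpha> * \<beta> + 2 * \<beta> * a1 + 4 * c1)^2 + 4 * \<beta>^2 * b1^2))
      \<le> ((\<alpha> * \<beta> + 2 * \<beta> * h)^2 + (\<beta> * \<sigma> + sqrt (\<beta>^2 * \<sigma>^2 + 4 * \<alpha> * \<beta> * \<rho>))^2)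
          / (4 * (\<alpha> * \<beta> + 2 * \<beta> * lH + 4 * lB)^2)"
proof (rule frac_le)
  have ab: "\<alpha> * \<beta> \<ge> 0" using assms by simp
  have "(\<alpha> * \<beta> + 2 * \<beta> * a1)^2 \<le> (\<alpha> * \<beta> + 2 * \<beta> * h)^2"
    using assms ab by (intro power_mono) (auto intro: add_left_mono mult_left_mono)
  moreover have "b1^2 \<le> \<sigma>^2" using assms(4) by (simp add: abs_le_square_iff power2_le_iff_abs_le)
  hence "\<beta>^2 * b1^2 + 4 * \<alpha> * \<beta> * c1 \<le> \<beta>^2 * \<sigma>^2 + 4 * \<alpha> * \<beta> * \<rho>"
    using assms ab by (intro add_mono mult_left_mono) auto
  hence "(\<beta> * \<bar>b1\<bar> + sqrt (\<beta>^2 * b1^2 + 4 * \<alpha> * \<beta> * c1))^2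
           \<le> (\<beta> * \<sigma> + sqrt (\<beta>^2 * \<sigma>^2 + 4 * \<alpha> * \<beta> * \<rho>))^2"
    using assms by (intro power_mono add_mono) auto
  ultimately show "(\<alpha> * \<beta> + 2 * \<beta> * a1)^2 + (\<beta> * \<bar>b1\<bar> + sqrt (\<beta>^2 * b1^2 + 4 * \<alpha> * \<beta> * c1))^2
      \<le> (\<alpha> * \<beta> + 2 * \<beta> * h)^2 + (\<beta> * \<sigma> + sqrt (\<beta>^2 * \<sigma>^2 + 4 * \<alpha> * \<beta> * \<rho>))^2"
    by simp
  show "0 \<le> (\<alpha> * \<beta> + 2 * \<beta> * h)^2 + (\<beta> * \<sigma> + sqrt (\<beta>^2 * \<sigma>^2 + 4 * \<alpha> * \<beta> * \<rho>))^2" by simp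
  have pos: "0 < \<alpha> * \<beta> + 2 * \<beta> * lH + 4 * lB" using assms ab by (simp add: add_nonneg_pos add_pos_nonneg)
  thus "0 < 4 * (\<alpha> * \<beta> + 2 * \<beta> * lH + 4 * lB)^2" by simp
  have "2 * \<beta> * lH \<le> 2 * \<beta> * a1" using assms by simp
  hence "\<alpha> * \<beta> + 2 * \<beta> * lH + 4 * lB \<le> \<alpha> * \<beta> + 2 * \<beta> * a1 + 4 * c1" using assms by linarith
  hence "(\<alpha> * \<beta> + 2 * \<beta> * lH + 4 * lB)^2 \<le> (\<alpha> * \<beta> + 2 * \<beta> * a1 + 4 * c1)^2"
    using pos by (intro power_mono) auto
  thus "4 * (\<alpha> * \<beta> + 2 * \<beta> * lH + 4 * lB)^2
      \<le> 4 * ((\<alpha> * \<beta> + 2 * \<beta> * a1 + 4 * c1)^2 + 4 * \<beta>^2 * b1^2)"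
    by (intro mult_left_mono add_increasing2) auto
qed

lemma MGSSP_rayleigh_quotient_bounds:
  fixes A :: "real^'m^'m" and B :: "real^'n^'m"
  assumes "pos_def A" and "u \<noteq> 0"
    and H: "H = (1/2) *\<^sub>R (A + transpose A)" and S: "S = (1/2) *\<^sub>R (A - transpose A)"
  shows "0 < lambda_min H" "lambda_min H \<le> Re (rayleigh_quotient A u)"
    "Re (rayleigh_quotient A u) \<le> spec_radius H"
    "\<bar>Im (rayleigh_quotient A u)\<bar> \<le> spec_radius S"
    "0 \<le> lambda_min (B ** transpose B)"
    "lambda_min (B ** transpose B) \<le> Re (rayleigh_quotient (B ** transpose B) u)"
    "Re (rayleigh_quotient (B ** transpose B) u) \<le> spec_radius (B ** transpose B)"
proof -
  have "transpose H = H" by (simp add: H vec_eq_iff transpose_def add.commute)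
  moreover have "\<forall>x. x \<noteq> 0 \<longrightarrow> x \<bullet> (H *v x) > 0"
    using assms(1) by (simp add: H pos_def_def quadratic_form_symmetric_part)
  ultimately show "0 < lambda_min H" by (rule lambda_min_pos)
  show "lambda_min H \<le> Re (rayleigh_quotient A u)" "Re (rayleigh_quotient A u) \<le> spec_radius H"
    using Re_rayleigh_quotient_bounds[OF \<open>transpose H = H\<close> assms(2)]
    by (simp_all add: H Re_rayleigh_quotient_symmetric_part[of u A])
  show "\<bar>Im (rayleigh_quotient A u)\<bar> \<le> spec_radius S"
    unfolding S by (rule Im_rayleigh_quotient_le_spec_radius[OF assms(2)])
  have "transpose (B ** transpose B) = B ** transpose B" by (simp add: matrix_transpose_mul)
  moreover have "\<forall>x. x \<bullet> ((B ** transpose B) *v x) \<ge> 0" by (simp add: quadratic_form_gram)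
  ultimately show "0 \<le> lambda_min (B ** transpose B)" by (rule lambda_min_nonneg)
  show "lambda_min (B ** transpose B) \<le> Re (rayleigh_quotient (B ** transpose B) u)"
    "Re (rayleigh_quotient (B ** transpose B) u) \<le> spec_radius (B ** transpose B)"
    using Re_rayleigh_quotient_bounds[OF \<open>transpose (B ** transpose B) = _\<close> assms(2)] by simp_all
qed

theorem theorem5p1:
  fixes A :: "real^'m^'m" and B :: "real^'n^'m" and \<alpha> \<beta> :: real
    and lam :: complex and u :: "complex^'m" and v :: "complex^'n" and s :: real
    and H S :: "real^'m^'m" and a1 b1 c1 a2 b2 z1 z2 bound1 bound2 :: real
    and D lam_p lam_m :: complex
  assumes "CARD('n) \<le> CARD('m)"
    and "pos_def A" and "\<alpha> \<ge> 0" and "\<beta> > 0"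
    and "stack u v \<noteq> 0"
    and "cmat (matrix_inv (P_MGSSP \<alpha> \<beta> A B) ** saddle_mat A B) *v stack u v = lam *s stack u v"
    and "cmat (transpose B) *v u \<noteq> 0"
  assumes "H = (1/2) *\<^sub>R (A + transpose A)"
    and "S = (1/2) *\<^sub>R (A - transpose A)"
    and "a1 = Re (cdot u (cmat A *v u) / cdot u u)"
    and "b1 = Im (cdot u (cmat A *v u) / cdot u u)"
    and "c1 = Re (cdot u (cmat (B ** transpose B) *v u) / cdot u u)"
    and "a2 = \<beta>^2 * (a1^2 - b1^2) - 4 * \<alpha> * \<beta> * c1"
    and "b2 = 2 * \<beta>^2 * a1 * b1"
    and "z1 = sqrt ((sqrt (a2^2 + b2^2) + a2) / 2)"
    and "s = 1 \<or> s = -1" and "b1 \<noteq> 0 \<Longrightarrow> s = sgn b1"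
    and "z2 = s * sqrt ((sqrt (a2^2 + b2^2) - a2) / 2)"
    and "D = Complex (\<alpha> * \<beta> + 2 * \<beta> * a1 + 4 * c1) (2 * \<beta> * b1)"
    and "lam_p = 1/2 + Complex (z1 - \<alpha> * \<beta> - \<beta> * a1) (z2 - \<beta> * b1) / (2 * D)"
    and "lam_m = 1/2 - Complex (z1 + \<alpha> * \<beta> + \<beta> * a1) (z2 + \<beta> * b1) / (2 * D)"
    and "bound1 = ((\<alpha> * \<beta> + 2 * \<beta> * a1)^2
                    + (\<beta> * \<bar>b1\<bar> + sqrt (\<beta>^2 * b1^2 + 4 * \<alpha> * \<beta> * c1))^2)
                  / (4 * ((\<alpha> * \<beta> + 2 * \<beta> * a1 + 4 * c1)^2 + 4 * \<beta>^2 * b1^2))"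
    and "bound2 = ((\<alpha> * \<beta> + 2 * \<beta> * spec_radius H)^2
                    + (\<beta> * spec_radius S + sqrt (\<beta>^2 * (spec_radius S)^2
                         + 4 * \<alpha> * \<beta> * spec_radius (B ** transpose B)))^2)
                  / (4 * (\<alpha> * \<beta> + 2 * \<beta> * lambda_min H + 4 * lambda_min (B ** transpose B))^2)"
  shows "(lam = lam_p \<or> lam = lam_m)
         \<and> (\<forall>\<mu>\<in>{lam_p, lam_m}. (cmod (\<mu> - 1/2))^2 \<le> bound1 \<and> bound1 \<le> bound2)"
proof -
  have "u \<noteq> 0" using assms(7) by auto
  note rq = MGSSP_rayleigh_quotient_bounds[OF assms(2) \<open>u \<noteq> 0\<close> assms(8,9)]
  have a1: "a1 > 0" and c1: "c1 > 0"
    using rq(1,2) Re_rayleigh_quotient_gram_pos[OF assms(7)] assms(10,12) by simp_all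
  have "rayleigh_quotient A u = Complex a1 b1" using assms(10,11) by (simp add: complex_eq_iff)
  moreover have "rayleigh_quotient (B ** transpose B) u = of_real c1"
    using rayleigh_quotient_symmetric[of "B ** transpose B" u] assms(12) by (simp add: matrix_transpose_mul)
  ultimately have quad: "(1 - 2 * lam) * lam * of_real \<beta> * Complex a1 b1 - lam^2 * of_real \<alpha> * of_real \<beta>
                           - (1 - 2 * lam)^2 * of_real c1 = 0"
    using MGSSP_eigenvalue_quadratic[OF P_MGSSP_invertible[OF assms(2-4)] assms(6) \<open>u \<noteq> 0\<close>] by simp
  have "Re D > 0" using assms(3,4,19) a1 c1 by (simp add: add_nonneg_pos)
  hence "D \<noteq> 0" by auto
  have "s * \<bar>b2\<bar> = b2"
    using assms(4,14,16,17) a1 by (cases "b1 = 0") (auto simp: abs_mult sgn_if)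
  hence "(Complex z1 z2)^2 = Complex a2 b2"
    using Complex_sqrt_formula_square[OF assms(16)] assms(15,18) by simp
  hence "lam = lam_p \<or> lam = lam_m"
    using MGSSP_quadratic_roots[OF quad assms(19) \<open>D \<noteq> 0\<close>] assms(13,14,20,21) by simp
  moreover have "\<forall>\<mu>\<in>{lam_p, lam_m}. (cmod (\<mu> - 1/2))^2 \<le> bound1"
    using MGSSP_root_distance_bounds[OF assms(4,3) a1 c1
        MGSSP_root_part_bounds[OF assms(4,3) a1 less_imp_le[OF c1] assms(13,14,15,18,16)] assms(19)]
      assms(20-22) by (auto simp: norm_minus_commute)
  moreover have "bound1 \<le> bound2"
    unfolding assms(22,23)
    by (rule MGSSP_bound_le_spectral_bound[OF assms(4,3)]) (use rq assms(10-12) in simp_all)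
  ultimately show ?thesis by blast
qed

end
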